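(* Let $f:\mathbb{R}^n\to\mathbb{R}$ and $a:\mathbb{R}^n\to\mathbb{R}^m$ be twice differentiable on $\mathbb{R}^n$, with parameters $\beta_1\in(0,1)$, $\beta_2\in(0,1)$, $\beta_3\in(\beta_2,1)$, $\beta_4\in(0,1)$, tolerances $\epsilon_{\mathrm{opt}}\in(0,\infty)$, $\epsilon_{\mathrm{far}},\epsilon_{\mathrm{inf}},\epsilon_{\mathrm{unbd}}\in(0,1)$, and $w\in\mathbb{R}^m$, $w\ge0$. Then, started from a point satisfying condition (C), the Simplified One-Phase Algorithm (Algorithm 1) terminates after a finite number of calls to the aggressive step procedure (Algorithm 2); i.e., it cannot make infinitely many calls to Algorithm 2.
   Context: Problem: minimize $f(x)$ subject to $a(x)\le0$. Notation: $e$ all-ones vector, $S=\mathrm{diag}(s)$, $Y=\mathrm{diag}(y)$, $\nabla a(x)$ the $m\times n$ Jacobian. Definitions: $\mathcal{L}_\mu(x,y)=f(x)+(y-\mu\beta_1e)^Ta(x)$; $\psi_\mu(x)=f(x)-\mu\sum_i(\beta_1a_i(x)+\log(\mu w_i-a_i(x)))$; $\phi_\mu(x,s,y)=\psi_\mu(x)+\|Sy-\mu e\|_\infty^3/\mu^2$; $\sigma(y)=100/\max\{100,\|y\|_\infty\}$; $\mathcal{M}=\nabla^2_{xx}\mathcal{L}_\mu(x,y)+\nabla a(x)^TYS^{-1}\nabla a(x)$. Condition (C): $(x,s,y,\mu)\in\mathbb{R}^n\times\mathbb{R}^m_{++}\times\mathbb{R}^m_{++}\times\mathbb{R}_{++}$,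 $s_iy_i/\mu\in[\beta_2,1/\beta_2]$ for all $i$, $a(x)+s=\mu w$. Termination: (T1) $\sigma(y)\|\nabla_x\mathcal{L}_0(x,y)\|_\infty\le\epsilon_{\mathrm{opt}}$, $\sigma(y)\|Sy\|_\infty\le\epsilon_{\mathrm{opt}}$, $\|a(x)+s\|_\infty\le\epsilon_{\mathrm{opt}}$; (T2) $a(x)^Ty>0$, $\|\nabla a(x)^Ty\|_1/(a(x)^Ty)\le\epsilon_{\mathrm{far}}$, $(\|\nabla a(x)^Ty\|_1+s^Ty)/\|y\|_1\le\epsilon_{\mathrm{inf}}$; (T3) $\|x\|_\infty\ge1/\epsilon_{\mathrm{unbd}}$. Aggressive criterion (A): $\sigma(y)\|\nabla_x\mathcal{L}_\mu(x,y)\|_\infty\le\mu$; $\|\nabla_x\mathcal{L}_\mu(x,y)\|_1\le\|\nabla f(x)-\beta_1\mu\nabla a(x)^Te\|_1+s^Ty$; $s_iy_i/\mu\in[\beta_3,1/\beta_3]$ for all $i$. Direction for $\gamma\in[0,1]$ and $\delta\ge0$ with $\mathcal{M}+\delta I\succ0$: $b_D=\nabla_x\mathcal{L}_{\gamma\mu}(x,y)$, $b_P=(1-\gamma)\mu w$, $b_C=Ys-\gamma\mu e$; $(\mathcal{M}+\delta I)d_x=-(b_D+\nabla a(x)^TS^{-1}(Yb_P-b_C))$; $d_y=-S^{-1}Y(\nabla a(x)d_x+b_P-Y^{-1}b_C)$. Update: $\mu^+=(1-(1-\gamma)\alpha_P)\mu$, $x^+=x+\alpha_Pd_x$, $s^+=\mu^+w-a(x^+)$,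 $y^+=y+\alpha_Dd_y$; admissible if $s^+,y^+,\mu^+>0$ and $s^+_iy^+_i/\mu^+\in[\beta_2,1/\beta_2]$ for all $i$. $\theta(\mu,s)=\min\{1/2,\frac{\beta_3-\beta_2}{2\beta_3\mu}\min_{i:w_i>0}s_i/w_i\}$. Algorithm 2 (aggressive step, given $\delta$): direction with $\gamma=0$; largest $\alpha_P\in[0,\min\{1/2,\mu\}]$ with the update admissible for some $\alpha_D\in[0,1]$; then the largest admissible $\alpha_D$; success iff $\alpha_P\ge\theta(\mu,s)$. Algorithm 3 (stabilization step, given $\delta$): direction with $\gamma=1$; largest $\alpha_P=\alpha_D\in[0,1]$ with the update admissible and $\phi_\mu(x^+,s^+,y^+)\le\phi_\mu(x,s,y)+\alpha_P\beta_4(\tfrac12(\nabla\psi_\mu(x)^Td_x-\tfrac\delta2\alpha_P\|d_x\|^2)-\|Sy-\mu e\|_\infty^3/\mu^2)$. Algorithm 1: input $x^0$, $\mu^0,s^0,y^0>0$ with $a(x^0)+s^0=\mu^0w$ and $s^0_iy^0_i/\mu^0\in[\beta_2,1/\beta_2]$. Each iteration: if (T1), (T2) or (T3) holds at the current point, terminate; set $\delta_{\min}=\max\{0,\mu-2\lambda_{\min}(\mathcal{M})\}$; if (A) holds: if $\delta_{\min}=0$ run Algorithm 2 with $\delta=0$ and accept its point if it succeeds; otherwise (or if $\delta_{\min}>0$) run Algorithm 2 with $\delta$ large enough that it succeeds and accept its point; if (A) fails, run Algorithm 3 with $\delta=\delta_{\min}$ and accept its point. *)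

theory Defs
  imports "HOL-Analysis.Analysis"
begin

text \<open>Problem data: objective f with gradient and Hessian, constraint map a with
Jacobian (m x n matrix, rows are gradients of a_i) and constraint Hessians.\<close>
record ('n::finite, 'm::finite) problem =
  obj   :: "real^'n \<Rightarrow> real"
  grad  :: "real^'n \<Rightarrow> real^'n"
  hess  :: "real^'n \<Rightarrow> real^'n^'n"
  con   :: "real^'n \<Rightarrow> real^'m"
  jac   :: "real^'n \<Rightarrow> real^'n^'m"
  chess :: "'m \<Rightarrow> real^'n \<Rightarrow> real^'n^'n"

record ('m::finite) params =
  beta1 :: real
  beta2 :: real
  beta3 :: real
  beta4 :: real
  wv    :: "real^'m"
  eps_opt  :: real
  eps_far  :: real
  eps_inf  :: real
  eps_unbd :: real

type_synonym ('n,'m) state = "(real^'n) \<times> (real^'m) \<times> (real^'m) \<times> real"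

definition ones :: "real^'m::finite" where "ones = (\<chi> i. 1)"

definition diagm :: "real^'m::finite \<Rightarrow> real^'m^'m" where
  "diagm v = (\<chi> i j. if i = j then v$i else 0)"

definition linf :: "real^'m::finite \<Rightarrow> real" where
  "linf v = Max (range (\<lambda>i. \<bar>v$i\<bar>))"

definition l1 :: "real^'m::finite \<Rightarrow> real" where
  "l1 v = (\<Sum>i\<in>UNIV. \<bar>v$i\<bar>)"

definition lmin :: "real^'n::finite^'n \<Rightarrow> real" where
  "lmin M = Inf {l. \<exists>v. v \<noteq> 0 \<and> M *v v = l *\<^sub>R v}"

definition posdef :: "real^'n::finite^'n \<Rightarrow> bool" where
  "posdef M \<longleftrightarrow> (\<forall>v. v \<noteq> 0 \<longrightarrow> v \<bullet> (M *v v) > 0)"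

definition greatest_in :: "real set \<Rightarrow> real \<Rightarrow> bool" where
  "greatest_in S a \<longleftrightarrow> a \<in> S \<and> (\<forall>b\<in>S. b \<le> a)"

text \<open>gradient of L_mu(x,y) = f(x) + (y - mu beta1 e)^T a(x) in x\<close>
definition gradL :: "('n::finite,'m::finite) problem \<Rightarrow> 'm params \<Rightarrow> real \<Rightarrow> real^'n \<Rightarrow> real^'m \<Rightarrow> real^'n" where
  "gradL P prm mu x y = grad P x + transpose (jac P x) *v (y - (mu * beta1 prm) *\<^sub>R ones)"

definition hessL :: "('n::finite,'m::finite) problem \<Rightarrow> 'm params \<Rightarrow> real \<Rightarrow> real^'n \<Rightarrow> real^'m \<Rightarrow> real^'n^'n" where
  "hessL P prm mu x y = hess P x + (\<Sum>i\<in>UNIV. (y$i - mu * beta1 prm) *\<^sub>R chess P i x)"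

definition Mmat :: "('n::finite,'m::finite) problem \<Rightarrow> 'm params \<Rightarrow> real \<Rightarrow> real^'n \<Rightarrow> real^'m \<Rightarrow> real^'m \<Rightarrow> real^'n^'n" where
  "Mmat P prm mu x s y = hessL P prm mu x y
     + transpose (jac P x) ** diagm (\<chi> i. y$i / s$i) ** jac P x"

definition psi :: "('n::finite,'m::finite) problem \<Rightarrow> 'm params \<Rightarrow> real \<Rightarrow> real^'n \<Rightarrow> real" where
  "psi P prm mu x = obj P x
     - mu * (\<Sum>i\<in>UNIV. beta1 prm * con P x $ i + ln (mu * wv prm $ i - con P x $ i))"

definition gradpsi :: "('n::finite,'m::finite) problem \<Rightarrow> 'm params \<Rightarrow> real \<Rightarrow> real^'n \<Rightarrow> real^'n" where
  "gradpsi P prm mu x = grad P x - (mu * beta1 prm) *\<^sub>R (transpose (jac P x) *v ones)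
     + mu *\<^sub>R (transpose (jac P x) *v (\<chi> i. 1 / (mu * wv prm $ i - con P x $ i)))"

definition phi :: "('n::finite,'m::finite) problem \<Rightarrow> 'm params \<Rightarrow> real \<Rightarrow> real^'n \<Rightarrow> real^'m \<Rightarrow> real^'m \<Rightarrow> real" where
  "phi P prm mu x s y = psi P prm mu x + linf (\<chi> i. s$i * y$i - mu) ^ 3 / mu ^ 2"

definition sigma :: "real^'m::finite \<Rightarrow> real" where
  "sigma y = 100 / max 100 (linf y)"

fun condC :: "('n::finite,'m::finite) problem \<Rightarrow> 'm params \<Rightarrow> ('n,'m) state \<Rightarrow> bool" where
  "condC P prm (x, s, y, mu) \<longleftrightarrow>
     (\<forall>i. s$i > 0) \<and> (\<forall>i. y$i > 0) \<and> mu > 0 \<and>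
     (\<forall>i. beta2 prm \<le> s$i * y$i / mu \<and> s$i * y$i / mu \<le> 1 / beta2 prm) \<and>
     con P x + s = mu *\<^sub>R wv prm"

fun termT1 :: "('n::finite,'m::finite) problem \<Rightarrow> 'm params \<Rightarrow> ('n,'m) state \<Rightarrow> bool" where
  "termT1 P prm (x, s, y, mu) \<longleftrightarrow>
     sigma y * linf (gradL P prm 0 x y) \<le> eps_opt prm \<and>
     sigma y * linf (\<chi> i. s$i * y$i) \<le> eps_opt prm \<and>
     linf (con P x + s) \<le> eps_opt prm"

fun termT2 :: "('n::finite,'m::finite) problem \<Rightarrow> 'm params \<Rightarrow> ('n,'m) state \<Rightarrow> bool" where
  "termT2 P prm (x, s, y, mu) \<longleftrightarrow>
     con P x \<bullet> y > 0 \<and>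
     l1 (transpose (jac P x) *v y) / (con P x \<bullet> y) \<le> eps_far prm \<and>
     (l1 (transpose (jac P x) *v y) + s \<bullet> y) / l1 y \<le> eps_inf prm"

fun termT3 :: "('n::finite,'m::finite) problem \<Rightarrow> 'm params \<Rightarrow> ('n,'m) state \<Rightarrow> bool" where
  "termT3 P prm (x, s, y, mu) \<longleftrightarrow> linf x \<ge> 1 / eps_unbd prm"

fun aggr :: "('n::finite,'m::finite) problem \<Rightarrow> 'm params \<Rightarrow> ('n,'m) state \<Rightarrow> bool" where
  "aggr P prm (x, s, y, mu) \<longleftrightarrow>
     sigma y * linf (gradL P prm mu x y) \<le> mu \<and>
     l1 (gradL P prm mu x y)
       \<le> l1 (grad P x - (beta1 prm * mu) *\<^sub>R (transpose (jac P x) *v ones)) + s \<bullet> y \<and>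
     (\<forall>i. beta3 prm \<le> s$i * y$i / mu \<and> s$i * y$i / mu \<le> 1 / beta3 prm)"

fun direction :: "('n::finite,'m::finite) problem \<Rightarrow> 'm params \<Rightarrow> real \<Rightarrow> real \<Rightarrow> ('n,'m) state
     \<Rightarrow> real^'n \<Rightarrow> real^'m \<Rightarrow> bool" where
  "direction P prm gam delta (x, s, y, mu) dx dy \<longleftrightarrow>
     (let Md = Mmat P prm mu x s y + delta *\<^sub>R mat 1;
          bD = gradL P prm (gam * mu) x y;
          bP = ((1 - gam) * mu) *\<^sub>R wv prm;
          bC = (\<chi> i. y$i * s$i - gam * mu)
      in posdef Md \<and>
         Md *v dx = - (bD + transpose (jac P x) *v (\<chi> i. (y$i * bP$i - bC$i) / s$i)) \<and>
         dy = - (\<chi> i. (y$i / s$i) * ((jac P x *v dx)$i + bP$i - bC$i / y$i)))"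

fun update :: "('n::finite,'m::finite) problem \<Rightarrow> 'm params \<Rightarrow> real \<Rightarrow> ('n,'m) state
     \<Rightarrow> real^'n \<Rightarrow> real^'m \<Rightarrow> real \<Rightarrow> real \<Rightarrow> ('n,'m) state" where
  "update P prm gam (x, s, y, mu) dx dy aP aD =
     (let mu' = (1 - (1 - gam) * aP) * mu; x' = x + aP *\<^sub>R dx
      in (x', mu' *\<^sub>R wv prm - con P x', y + aD *\<^sub>R dy, mu'))"

fun admissible :: "'m::finite params \<Rightarrow> ('n::finite,'m) state \<Rightarrow> bool" where
  "admissible prm (x, s, y, mu) \<longleftrightarrow>
     (\<forall>i. s$i > 0) \<and> (\<forall>i. y$i > 0) \<and> mu > 0 \<and>
     (\<forall>i. beta2 prm \<le> s$i * y$i / mu \<and> s$i * y$i / mu \<le> 1 / beta2 prm)"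

text \<open>theta(mu,s); the inner minimum over an empty index set is taken as +infinity.\<close>
definition theta :: "'m::finite params \<Rightarrow> real \<Rightarrow> real^'m \<Rightarrow> real" where
  "theta prm mu s =
     (if {i. wv prm $ i > 0} = {} then 1/2
      else min (1/2) ((beta3 prm - beta2 prm) / (2 * beta3 prm * mu)
                      * Min ((\<lambda>i. s$i / wv prm $ i) ` {i. wv prm $ i > 0})))"

fun alg2 :: "('n::finite,'m::finite) problem \<Rightarrow> 'm params \<Rightarrow> real \<Rightarrow> ('n,'m) state
     \<Rightarrow> ('n,'m) state \<Rightarrow> bool \<Rightarrow> bool" where
  "alg2 P prm delta (x, s, y, mu) st' succ \<longleftrightarrow>
     (\<exists>dx dy aP aD.
        direction P prm 0 delta (x, s, y, mu) dx dy \<and>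
        greatest_in {a \<in> {0..min (1/2) mu}.
            \<exists>b \<in> {0..1}. admissible prm (update P prm 0 (x, s, y, mu) dx dy a b)} aP \<and>
        greatest_in {b \<in> {0..1}. admissible prm (update P prm 0 (x, s, y, mu) dx dy aP b)} aD \<and>
        st' = update P prm 0 (x, s, y, mu) dx dy aP aD \<and>
        succ = (aP \<ge> theta prm mu s))"

fun alg3 :: "('n::finite,'m::finite) problem \<Rightarrow> 'm params \<Rightarrow> real \<Rightarrow> ('n,'m) state
     \<Rightarrow> ('n,'m) state \<Rightarrow> bool" where
  "alg3 P prm delta (x, s, y, mu) st' \<longleftrightarrow>
     (\<exists>dx dy aP.
        direction P prm 1 delta (x, s, y, mu) dx dy \<and>
        greatest_in {a \<in> {0..1}.
            admissible prm (update P prm 1 (x, s, y, mu) dx dy a a) \<and>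
            (case update P prm 1 (x, s, y, mu) dx dy a a of (x', s', y', mu') \<Rightarrow>
              phi P prm mu x' s' y'
                \<le> phi P prm mu x s y
                   + a * beta4 prm * ((1/2) * (gradpsi P prm mu x \<bullet> dx - (delta / 2) * a * (norm dx)\<^sup>2)
                                     - linf (\<chi> i. s$i * y$i - mu) ^ 3 / mu ^ 2))} aP \<and>
        st' = update P prm 1 (x, s, y, mu) dx dy aP aP)"

fun alg1_step :: "('n::finite,'m::finite) problem \<Rightarrow> 'm params \<Rightarrow> ('n,'m) state
     \<Rightarrow> ('n,'m) state \<Rightarrow> bool" where
  "alg1_step P prm (x, s, y, mu) st' \<longleftrightarrow>
     \<not> termT1 P prm (x, s, y, mu) \<and> \<not> termT2 P prm (x, s, y, mu) \<and> \<not> termT3 P prm (x, s, y, mu) \<and>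
     (let dmin = max 0 (mu - 2 * lmin (Mmat P prm mu x s y))
      in if aggr P prm (x, s, y, mu) then
           (if dmin = 0 \<and> (\<exists>st''. alg2 P prm 0 (x, s, y, mu) st'' True)
            then alg2 P prm 0 (x, s, y, mu) st' True
            else (\<exists>delta \<ge> dmin. alg2 P prm delta (x, s, y, mu) st' True))
         else alg3 P prm dmin (x, s, y, mu) st')"

end

theory Submission
  imports Defs
begin

(* The barrier parameter mu never increases along a run, and every aggressive step multiplies
   it by at most 1 - theta(mu, s).  Since T3 never fires, the iterates stay in the box
   linf x < 1 / eps_unbd, where the gradient and the Jacobian are bounded by continuity.  On
   that box two uniform estimates hold at every aggressive, non-terminating iterate: mu is
   bounded below, since otherwise the residuals of T1 are all O(mu); and each slack s_i with
   w_i > 0 is at least a fixed multiple of mu w_i, since otherwise y_i is so large that the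
   certificate of T2 appears.  The second estimate bounds theta below, so the geometric decrease
   of mu at aggressive steps can happen only finitely often. *)

lemma linf_nth_le: "\<bar>v $ i\<bar> \<le> linf v"
  unfolding linf_def by (rule Max_ge) auto

lemma linf_leI: "(\<And>i. \<bar>v $ i\<bar> \<le> c) \<Longrightarrow> linf v \<le> c"
  unfolding linf_def by (subst Max_le_iff) auto

lemma linf_nonneg: "0 \<le> linf v"
  using linf_nth_le[of v] abs_ge_zero order_trans by blast

lemma l1_nth_le: "\<bar>v $ i\<bar> \<le> l1 v"
  unfolding l1_def by (rule member_le_sum) auto

lemma l1_nonneg: "0 \<le> l1 v"
  unfolding l1_def by (simp add: sum_nonneg)

lemma l1_diff_le: "l1 (u - v) \<le> l1 u + l1 v"
  unfolding l1_def by (simp add: sum.distrib[symmetric] sum_mono abs_triangle_ineq4)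

lemma l1_scaleR: "l1 (c *\<^sub>R v) = \<bar>c\<bar> * l1 v"
  unfolding l1_def by (simp add: abs_mult sum_distrib_left)

lemma l1_leI:
  fixes v :: "real^'m::finite" and c :: real
  assumes "\<And>i. \<bar>v $ i\<bar> \<le> c"
  shows "l1 v \<le> CARD('m) * c"
  unfolding l1_def using sum_mono[of UNIV "\<lambda>i. \<bar>v $ i\<bar>" "\<lambda>_. c"] assms by simp

lemma l1_ones: "l1 (ones :: real^'m::finite) = CARD('m)"
  unfolding l1_def ones_def by simp

lemma abs_transpose_mult_vec_le:
  fixes A :: "real^'n::finite^'m::finite"
  assumes "\<And>i j. \<bar>A $ i $ j\<bar> \<le> B"
  shows "\<bar>(transpose A *v v) $ j\<bar> \<le> B * l1 v"
proof -
  have "\<bar>(transpose A *v v) $ j\<bar> = \<bar>\<Sum>i\<in>UNIV. A $ i $ j * v $ i\<bar>"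
    by (simp add: matrix_vector_mult_def transpose_def)
  also have "\<dots> \<le> (\<Sum>i\<in>UNIV. B * \<bar>v $ i\<bar>)"
    by (rule order_trans[OF sum_abs sum_mono]) (simp add: abs_mult assms mult_right_mono)
  finally show ?thesis by (simp add: l1_def sum_distrib_left)
qed

lemma l1_transpose_mult_vec_le:
  fixes A :: "real^'n::finite^'m::finite"
  assumes "\<And>i j. \<bar>A $ i $ j\<bar> \<le> B"
  shows "l1 (transpose A *v v) \<le> CARD('n) * (B * l1 v)"
  by (rule l1_leI) (rule abs_transpose_mult_vec_le[OF assms])

lemma sigma_pos: "0 < sigma y"
  and sigma_le_one: "sigma y \<le> 1"
  unfolding sigma_def by (auto simp: divide_le_eq)

lemma gradL_eq:
  "gradL P prm mu x y
     = grad P x - (beta1 prm * mu) *\<^sub>R (transpose (jac P x) *v ones) + transpose (jac P x) *v y"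
  unfolding gradL_def by (simp add: matrix_vector_mult_diff_distrib matrix_vector_mult_scaleR mult.commute)

fun barrier_param :: "('n, 'm) state \<Rightarrow> real" where
  "barrier_param (x, s, y, mu) = mu"

lemma condC_update:
  "admissible prm (update P prm gam st dx dy a b) \<Longrightarrow> condC P prm (update P prm gam st dx dy a b)"
  by (cases st) (auto simp: Let_def)

lemma alg2_success:
  assumes "alg2 P prm delta (x, s, y, mu) st' True" and "0 \<le> mu"
  shows "condC P prm st' \<and> barrier_param st' \<le> mu \<and> barrier_param st' \<le> (1 - theta prm mu s) * mu"
proof -
  obtain dx dy aP aD where
    aP: "greatest_in {a \<in> {0..min (1/2) mu}.
            \<exists>b \<in> {0..1}. admissible prm (update P prm 0 (x, s, y, mu) dx dy a b)} aP"
    and aD: "greatest_in {b \<in> {0..1}. admissible prm (update P prm 0 (x, s, y, mu) dx dy aP b)} aD"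
    and st': "st' = update P prm 0 (x, s, y, mu) dx dy aP aD"
    and theta: "theta prm mu s \<le> aP"
    using assms(1) by auto
  have "condC P prm st'"
    using aD condC_update unfolding st' greatest_in_def by blast
  moreover have "barrier_param st' = (1 - aP) * mu"
    by (simp add: st' Let_def)
  moreover have "0 \<le> aP * mu"
    using aP assms(2) by (simp add: greatest_in_def)
  moreover have "theta prm mu s * mu \<le> aP * mu"
    using theta assms(2) by (rule mult_right_mono)
  ultimately show ?thesis
    by (simp add: algebra_simps)
qed

lemma alg3_result:
  assumes "alg3 P prm delta (x, s, y, mu) st'"
  shows "condC P prm st' \<and> barrier_param st' = mu"
proof -
  obtain dx dy aP where
    "admissible prm (update P prm 1 (x, s, y, mu) dx dy aP aP)"
    and st': "st' = update P prm 1 (x, s, y, mu) dx dy aP aP"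
    using assms by (auto simp: greatest_in_def)
  then show ?thesis
    using condC_update by (fastforce simp: Let_def)
qed

lemma alg1_step_nonterminal:
  assumes "alg1_step P prm st st'"
  shows "\<not> termT1 P prm st \<and> \<not> termT2 P prm st \<and> \<not> termT3 P prm st"
  using assms by (cases st) (simp only: alg1_step.simps, blast)

lemma alg1_step_aggr_alg2:
  "alg1_step P prm (x, s, y, mu) st' \<Longrightarrow> aggr P prm (x, s, y, mu)
     \<Longrightarrow> \<exists>delta. alg2 P prm delta (x, s, y, mu) st' True"
  by (auto simp only: alg1_step.simps Let_def split: if_splits)

lemma alg1_step_stab_alg3:
  "alg1_step P prm (x, s, y, mu) st' \<Longrightarrow> \<not> aggr P prm (x, s, y, mu)
     \<Longrightarrow> \<exists>delta. alg3 P prm delta (x, s, y, mu) st'"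
  by (auto simp only: alg1_step.simps Let_def split: if_splits)

lemma alg1_step_aggr_contracts:
  assumes "alg1_step P prm (x, s, y, mu) st'" and "aggr P prm (x, s, y, mu)" and "0 \<le> mu"
  shows "barrier_param st' \<le> (1 - theta prm mu s) * mu"
  using alg1_step_aggr_alg2[OF assms(1,2)] alg2_success assms(3) by blast

lemma aggr_complementarity:
  assumes "aggr P prm (x, s, y, mu)" and "0 < mu" and "0 < beta3 prm"
  shows "beta3 prm * mu \<le> s $ i * y $ i \<and> s $ i * y $ i \<le> mu / beta3 prm"
  using assms by (simp add: le_divide_eq divide_le_eq field_simps)

lemma aggr_inner_le:
  fixes s y :: "real^'m::finite" and mu :: real
  assumes "aggr P prm (x, s, y, mu)" and "0 < mu" and "0 < beta3 prm"
  shows "s \<bullet> y \<le> CARD('m) * mu / beta3 prm"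
proof -
  have "s \<bullet> y = (\<Sum>i\<in>UNIV. s $ i * y $ i)"
    by (simp add: inner_vec_def)
  also have "\<dots> \<le> (\<Sum>i\<in>(UNIV :: 'm set). mu / beta3 prm)"
    using aggr_complementarity[OF assms] by (intro sum_mono) blast
  finally show ?thesis
    by simp
qed

lemma gradL_zero_eq:
  "gradL P prm 0 x y = gradL P prm mu x y + (beta1 prm * mu) *\<^sub>R (transpose (jac P x) *v ones)"
  unfolding gradL_eq by simp

lemma aggr_dual_residual_le:
  fixes P :: "('n::finite, 'm::finite) problem"
  assumes "aggr P prm (x, s, y, mu)" and "0 \<le> mu" and "0 \<le> beta1 prm"
    and "\<And>i j. \<bar>jac P x $ i $ j\<bar> \<le> J"
  shows "sigma y * linf (gradL P prm 0 x y) \<le> mu * (1 + beta1 prm * CARD('m) * J)"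
proof -
  let ?c = "beta1 prm * mu"
  have "\<bar>gradL P prm 0 x y $ j\<bar> \<le> linf (gradL P prm mu x y) + ?c * (J * CARD('m))" for j
  proof -
    have "\<bar>(transpose (jac P x) *v ones) $ j\<bar> \<le> J * CARD('m)"
      using abs_transpose_mult_vec_le[of "jac P x" J ones j] assms(4) by (simp add: l1_ones)
    then have "\<bar>?c * (transpose (jac P x) *v ones) $ j\<bar> \<le> ?c * (J * CARD('m))"
      using assms(2,3) by (simp add: abs_mult mult_left_mono)
    moreover have "gradL P prm 0 x y $ j = gradL P prm mu x y $ j + ?c * (transpose (jac P x) *v ones) $ j"
      by (subst gradL_zero_eq[where mu = mu]) simp
    ultimately show ?thesis
      using linf_nth_le[of "gradL P prm mu x y" j] by linarith
  qed
  then have "linf (gradL P prm 0 x y) \<le> linf (gradL P prm mu x y) + ?c * (J * CARD('m))"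
    by (rule linf_leI)
  then have "sigma y * linf (gradL P prm 0 x y)
      \<le> sigma y * linf (gradL P prm mu x y) + sigma y * (?c * (J * CARD('m)))"
    using sigma_pos[of y] by (simp add: distrib_left[symmetric] mult_left_mono)
  also have "\<dots> \<le> mu + ?c * (J * CARD('m))"
  proof (rule add_mono)
    show "sigma y * linf (gradL P prm mu x y) \<le> mu"
      using assms(1) by simp
    have "0 \<le> ?c * (J * CARD('m))"
      using assms(2-4) by (meson abs_ge_zero order_trans mult_nonneg_nonneg of_nat_0_le_iff)
    then show "sigma y * (?c * (J * CARD('m))) \<le> ?c * (J * CARD('m))"
      using sigma_pos[of y] sigma_le_one[of y] by (simp add: mult_left_le_one_le)
  qed
  finally show ?thesis
    by (simp add: algebra_simps)
qed

lemma termT1_if_aggr_small_barrier: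
  fixes P :: "('n::finite, 'm::finite) problem"
  assumes agg: "aggr P prm (x, s, y, mu)" and C: "condC P prm (x, s, y, mu)"
    and J: "\<And>i j. \<bar>jac P x $ i $ j\<bar> \<le> J"
    and b1: "0 \<le> beta1 prm" and b3: "0 < beta3 prm"
    and small: "mu * (1 + beta1 prm * CARD('m) * J) \<le> eps_opt prm"
      "mu \<le> eps_opt prm * beta3 prm" "mu * linf (wv prm) \<le> eps_opt prm"
  shows "termT1 P prm (x, s, y, mu)"
proof -
  have mu: "0 < mu" and feas: "con P x + s = mu *\<^sub>R wv prm"
    using C by auto
  have "sigma y * linf (gradL P prm 0 x y) \<le> eps_opt prm"
    using aggr_dual_residual_le[OF agg less_imp_le[OF mu] b1 J] small(1) by linarith
  moreover have "sigma y * linf (\<chi> i. s $ i * y $ i) \<le> eps_opt prm"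
  proof -
    have "\<bar>s $ i * y $ i\<bar> \<le> mu / beta3 prm" for i
      using aggr_complementarity[OF agg mu b3, of i] mult_pos_pos[OF b3 mu]
      by (simp add: abs_le_iff)
    then have "linf (\<chi> i. s $ i * y $ i) \<le> mu / beta3 prm"
      by (intro linf_leI) simp
    also have "\<dots> \<le> eps_opt prm"
      using small(2) b3 by (simp add: divide_le_eq)
    finally show ?thesis
      using sigma_pos[of y] sigma_le_one[of y] linf_nonneg[of "\<chi> i. s $ i * y $ i"]
      by (meson less_imp_le mult_left_le_one_le order_trans)
  qed
  moreover have "linf (con P x + s) \<le> eps_opt prm"
  proof -
    have "linf (con P x + s) \<le> mu * linf (wv prm)"
      unfolding feas using mu linf_nth_le[of "wv prm"]
      by (intro linf_leI) (simp add: abs_mult mult_left_mono)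
    then show ?thesis
      using small(3) by linarith
  qed
  ultimately show ?thesis
    by simp
qed

lemma l1_grad_shift_le:
  fixes P :: "('n::finite, 'm::finite) problem" and J c :: real
  assumes "\<And>j. \<bar>grad P x $ j\<bar> \<le> G" and "\<And>i j. \<bar>jac P x $ i $ j\<bar> \<le> J"
    and "0 \<le> c"
  shows "l1 (grad P x - c *\<^sub>R (transpose (jac P x) *v ones)) \<le> CARD('n) * (G + c * (J * CARD('m)))"
proof -
  have "l1 (grad P x - c *\<^sub>R (transpose (jac P x) *v ones))
      \<le> l1 (grad P x) + c * l1 (transpose (jac P x) *v ones)"
    using l1_diff_le[of "grad P x" "c *\<^sub>R (transpose (jac P x) *v ones)"]
      l1_scaleR[of c "transpose (jac P x) *v ones"] assms(3)
    by simp
  also have "\<dots> \<le> CARD('n) * G + c * (CARD('n) * (J * CARD('m)))"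
    using l1_leI[of "grad P x", OF assms(1)] assms(3)
      l1_transpose_mult_vec_le[of "jac P x" J ones, OF assms(2)]
    by (intro add_mono mult_left_mono) (simp_all add: l1_ones)
  finally show ?thesis
    by (simp add: algebra_simps)
qed

lemma aggr_l1_jac_dual_le:
  assumes "aggr P prm (x, s, y, mu)"
  shows "l1 (transpose (jac P x) *v y)
    \<le> 2 * l1 (grad P x - (beta1 prm * mu) *\<^sub>R (transpose (jac P x) *v ones)) + s \<bullet> y"
proof -
  let ?g = "grad P x - (beta1 prm * mu) *\<^sub>R (transpose (jac P x) *v ones)"
  have "transpose (jac P x) *v y = gradL P prm mu x y - ?g"
    by (simp add: gradL_eq)
  then have "l1 (transpose (jac P x) *v y) \<le> l1 (gradL P prm mu x y) + l1 ?g"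
    by (simp add: l1_diff_le)
  moreover have "l1 (gradL P prm mu x y) \<le> l1 ?g + s \<bullet> y"
    using assms by simp
  ultimately show ?thesis
    by linarith
qed

lemma termT2_intro:
  assumes "0 < con P x \<bullet> y"
    and "l1 (transpose (jac P x) *v y) \<le> eps_far prm * (con P x \<bullet> y)"
    and "l1 (transpose (jac P x) *v y) + s \<bullet> y \<le> eps_inf prm * l1 y" and "0 < l1 y"
  shows "termT2 P prm (x, s, y, mu)"
  using assms by (simp add: divide_le_eq mult.commute)

lemma termT2_if_large_dual:
  assumes C: "condC P prm (x, s, y, mu)" and w: "\<And>i. 0 \<le> wv prm $ i"
    and K: "l1 (transpose (jac P x) *v y) \<le> D" and S: "s \<bullet> y \<le> mu * E"
    and Qi: "Q \<le> wv prm $ i * y $ i" and W: "wv prm $ i \<le> W" "0 < W"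
    and Q_far: "E + D / (eps_far prm * mu) < Q"
    and Q_inf: "W * (D + mu * E) / eps_inf prm \<le> Q"
    and eps: "0 < eps_far prm" "0 < eps_inf prm"
  shows "termT2 P prm (x, s, y, mu)"
proof -
  have mu: "0 < mu" and y: "\<And>i. 0 < y $ i" and feas: "con P x = mu *\<^sub>R wv prm - s"
    using C by (auto simp: algebra_simps)
  have D0: "0 \<le> D"
    using K l1_nonneg order_trans by blast
  have "mu * Q \<le> mu * (wv prm \<bullet> y)"
    using Qi w y mu
    by (intro mult_left_mono order_trans[OF Qi]) (auto simp: inner_vec_def less_imp_le intro!: member_le_sum)
  then have lower: "mu * (Q - E) \<le> con P x \<bullet> y"
    using S by (simp add: feas algebra_simps)
  have "D / eps_far prm = mu * (D / (eps_far prm * mu))"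
    using mu by simp
  also have "\<dots> < mu * (Q - E)"
    using mult_strict_left_mono[of "D / (eps_far prm * mu)" "Q - E" mu] Q_far mu by simp
  finally have far: "D / eps_far prm < con P x \<bullet> y"
    using lower by linarith
  have "(D + mu * E) / eps_inf prm \<le> y $ i"
  proof -
    have "W * ((D + mu * E) / eps_inf prm) \<le> W * y $ i"
      using Q_inf Qi W(1) mult_right_mono[OF W(1) less_imp_le[OF y[of i]]] by simp
    then show ?thesis
      using W(2) by (simp only: mult_le_cancel_left_pos)
  qed
  then have "D + mu * E \<le> eps_inf prm * y $ i"
    using eps(2) by (simp add: divide_le_eq mult.commute)
  also have "\<dots> \<le> eps_inf prm * l1 y"
    using l1_nth_le[of y i] y[of i] eps(2) by (intro mult_left_mono) auto
  finally have "D + mu * E \<le> eps_inf prm * l1 y" .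
  moreover have "0 < l1 y"
    using l1_nth_le[of y i] y[of i] by simp
  moreover have "0 < con P x \<bullet> y"
    using far D0 eps(1) by (smt (verit) divide_nonneg_pos)
  moreover have "l1 (transpose (jac P x) *v y) \<le> eps_far prm * (con P x \<bullet> y)"
    using far K eps(1) by (simp add: divide_less_eq mult.commute)
  ultimately show ?thesis
    using K S by (intro termT2_intro) auto
qed

lemma aggr_small_slack_large_dual:
  assumes "aggr P prm (x, s, y, mu)" and "0 < mu" and "0 < beta3 prm" and "0 < y $ i"
    and "0 \<le> Q" and "s $ i * Q < beta3 prm * mu * wv prm $ i"
  shows "Q < wv prm $ i * y $ i"
proof -
  have "(beta3 prm * mu) * Q \<le> (s $ i * y $ i) * Q"
    using aggr_complementarity[OF assms(1-3)] assms(5) by (simp add: mult_right_mono)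
  also have "\<dots> = (s $ i * Q) * y $ i"
    by (simp add: ac_simps)
  also have "\<dots> < (beta3 prm * mu * wv prm $ i) * y $ i"
    using assms(4,6) by (rule mult_strict_right_mono[rotated])
  finally show ?thesis
    using assms(2,3) by (simp add: mult.assoc)
qed

lemma theta_ge:
  assumes slack: "\<And>i. 0 < wv prm $ i \<Longrightarrow> beta3 prm * mu * wv prm $ i \<le> s $ i * Q"
    and "0 < Q" and "0 < mu" and "beta2 prm < beta3 prm" and "0 < beta3 prm"
  shows "min (1/2) ((beta3 prm - beta2 prm) / (2 * Q)) \<le> theta prm mu s"
proof (cases "{i. wv prm $ i > 0} = {}")
  case True
  then show ?thesis
    by (simp add: theta_def)
next
  case False
  let ?I = "{i. wv prm $ i > 0}" and ?c = "(beta3 prm - beta2 prm) / (2 * beta3 prm * mu)"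
  have "beta3 prm * mu / Q \<le> Min ((\<lambda>i. s $ i / wv prm $ i) ` ?I)"
  proof (subst Min_ge_iff)
    show "\<forall>a \<in> (\<lambda>i. s $ i / wv prm $ i) ` ?I. beta3 prm * mu / Q \<le> a"
      using slack \<open>0 < Q\<close> by (auto simp: divide_le_eq le_divide_eq mult.commute)
  qed (use False in auto)
  then have "?c * (beta3 prm * mu / Q) \<le> ?c * Min ((\<lambda>i. s $ i / wv prm $ i) ` ?I)"
    using assms(3-5) by (intro mult_left_mono) simp_all
  moreover have "?c * (beta3 prm * mu / Q) = (beta3 prm - beta2 prm) / (2 * Q)"
    using assms(2,3,5) by (simp add: field_simps)
  ultimately have "(beta3 prm - beta2 prm) / (2 * Q) \<le> ?c * Min ((\<lambda>i. s $ i / wv prm $ i) ` ?I)"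
    by linarith
  then show ?thesis
    unfolding theta_def if_not_P[OF False] by (rule min.mono[OF order_refl])
qed

lemma aggr_barrier_lower_bound:
  fixes P :: "('n::finite, 'm::finite) problem"
  assumes "0 \<le> beta1 prm" and "0 < beta3 prm" and "0 < eps_opt prm"
  shows "\<exists>mu_lo > 0. \<forall>x s y mu. (\<forall>i j. \<bar>jac P x $ i $ j\<bar> \<le> J) \<longrightarrow>
    condC P prm (x, s, y, mu) \<longrightarrow> aggr P prm (x, s, y, mu) \<longrightarrow> \<not> termT1 P prm (x, s, y, mu)
    \<longrightarrow> mu_lo < mu"
proof -
  define M where "M = max (1 + beta1 prm * CARD('m) * J) (max (1 / beta3 prm) (linf (wv prm)))"
  have M: "0 < M"
    using assms(2) unfolding M_def by (simp add: less_max_iff_disj)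
  have "mu_lo < mu"
    if "\<forall>i j. \<bar>jac P x $ i $ j\<bar> \<le> J" "condC P prm (x, s, y, mu)" "aggr P prm (x, s, y, mu)"
      "\<not> termT1 P prm (x, s, y, mu)" "mu_lo = eps_opt prm / M"
    for x s y mu mu_lo
  proof (rule ccontr)
    assume "\<not> mu_lo < mu"
    then have "mu * M \<le> eps_opt prm"
      using that(5) M by (simp add: not_less le_divide_eq)
    moreover have "0 < mu"
      using that(2) by simp
    ultimately have "mu * (1 + beta1 prm * CARD('m) * J) \<le> eps_opt prm"
      "mu * (1 / beta3 prm) \<le> eps_opt prm" "mu * linf (wv prm) \<le> eps_opt prm"
      unfolding M_def by (smt (verit) max.cobounded1 max.cobounded2 mult_left_mono)+
    then have "termT1 P prm (x, s, y, mu)"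
      using that(1-3) assms(1,2) by (intro termT1_if_aggr_small_barrier) (auto simp: divide_le_eq mult.commute)
    then show False
      using that(4) by simp
  qed
  then show ?thesis
    using assms(3) M by (intro exI[of _ "eps_opt prm / M"]) auto
qed

lemma aggr_slack_lower_bound:
  fixes P :: "('n::finite, 'm::finite) problem"
  assumes b1: "0 \<le> beta1 prm" and b3: "0 < beta3 prm"
    and eps: "0 < eps_far prm" "0 < eps_inf prm" and w: "\<And>i. 0 \<le> wv prm $ i"
    and G: "0 \<le> G" and J: "0 \<le> J" and mu_lo: "0 < mu_lo" and mu_hi: "0 \<le> mu_hi"
  shows "\<exists>Q > 0. \<forall>x s y mu.
    (\<forall>j. \<bar>grad P x $ j\<bar> \<le> G) \<longrightarrow> (\<forall>i j. \<bar>jac P x $ i $ j\<bar> \<le> J) \<longrightarrow>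
    condC P prm (x, s, y, mu) \<longrightarrow> aggr P prm (x, s, y, mu) \<longrightarrow> mu_lo \<le> mu \<longrightarrow> mu \<le> mu_hi \<longrightarrow>
    \<not> termT2 P prm (x, s, y, mu) \<longrightarrow>
    (\<forall>i. 0 < wv prm $ i \<longrightarrow> beta3 prm * mu * wv prm $ i \<le> s $ i * Q)"
proof -
  \<comment> \<open>E bounds s \<bullet> y / mu, D bounds the l1 norm of the transposed Jacobian applied to y.\<close>
  define E where "E = CARD('m) / beta3 prm"
  define D where "D = 2 * (CARD('n) * (G + beta1 prm * mu_hi * (J * CARD('m)))) + mu_hi * E"
  define W where "W = linf (wv prm) + 1"
  define Q where "Q = max (E + D / (eps_far prm * mu_lo) + 1) (W * (D + mu_hi * E) / eps_inf prm)"
  have E: "0 \<le> E" and D: "0 \<le> D" and W: "0 < W"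
    using b1 b3 G J mu_hi linf_nonneg[of "wv prm"] by (simp_all add: E_def D_def W_def)
  have Q: "0 < Q"
    using E D eps mu_lo unfolding Q_def by (simp add: less_max_iff_disj add_nonneg_pos)
  have "beta3 prm * mu * wv prm $ i \<le> s $ i * Q"
    if gJ: "\<forall>j. \<bar>grad P x $ j\<bar> \<le> G" "\<forall>i j. \<bar>jac P x $ i $ j\<bar> \<le> J"
      and C: "condC P prm (x, s, y, mu)" and agg: "aggr P prm (x, s, y, mu)"
      and mu: "mu_lo \<le> mu" "mu \<le> mu_hi" and nT2: "\<not> termT2 P prm (x, s, y, mu)"
      and i: "0 < wv prm $ i"
    for x s y mu i
  proof (rule ccontr)
    assume "\<not> ?thesis"
    then have "Q < wv prm $ i * y $ i"
      using aggr_small_slack_large_dual[OF agg _ b3 _ less_imp_le[OF Q]] C by auto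
    have S: "s \<bullet> y \<le> mu * E"
      using aggr_inner_le[OF agg _ b3] C by (simp add: E_def algebra_simps)
    have "l1 (grad P x - (beta1 prm * mu) *\<^sub>R (transpose (jac P x) *v ones))
        \<le> CARD('n) * (G + beta1 prm * mu * (J * CARD('m)))"
      using gJ b1 C by (intro l1_grad_shift_le) auto
    then have "l1 (transpose (jac P x) *v y)
        \<le> 2 * (CARD('n) * (G + beta1 prm * mu * (J * CARD('m)))) + s \<bullet> y"
      using aggr_l1_jac_dual_le[OF agg] by linarith
    also have "\<dots> \<le> D"
    proof -
      have "beta1 prm * mu \<le> beta1 prm * mu_hi" and "mu * E \<le> mu_hi * E"
        using mu b1 E by (simp_all add: mult_left_mono mult_right_mono)
      then show ?thesis
        using S J mu b1 unfolding D_def by (intro add_mono mult_left_mono mult_right_mono) simp_all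
    qed
    finally have K: "l1 (transpose (jac P x) *v y) \<le> D" .
    have "termT2 P prm (x, s, y, mu)"
    proof (rule termT2_if_large_dual[OF C w K S])
      show "Q \<le> wv prm $ i * y $ i" "wv prm $ i \<le> W"
        using \<open>Q < wv prm $ i * y $ i\<close> linf_nth_le[of "wv prm" i] by (auto simp: W_def)
      have "D / (eps_far prm * mu) \<le> D / (eps_far prm * mu_lo)"
        using mu mu_lo D eps(1) by (intro divide_left_mono) simp_all
      then show "E + D / (eps_far prm * mu) < Q"
        unfolding Q_def by linarith
      have "W * (D + mu * E) \<le> W * (D + mu_hi * E)"
        using mu E W by (intro mult_left_mono add_left_mono mult_right_mono) simp_all
      then have "W * (D + mu * E) / eps_inf prm \<le> W * (D + mu_hi * E) / eps_inf prm"
        using eps(2) by (simp add: divide_right_mono)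
      then show "W * (D + mu * E) / eps_inf prm \<le> Q"
        unfolding Q_def by linarith
    qed (use W eps in auto)
    then show False
      using nT2 by simp
  qed
  then show ?thesis
    using Q by blast
qed

lemma aggressive_uniform_bounds:
  fixes P :: "('n::finite, 'm::finite) problem"
  assumes b1: "0 \<le> beta1 prm" and b3: "beta2 prm < beta3 prm" "0 < beta3 prm"
    and eps: "0 < eps_opt prm" "0 < eps_far prm" "0 < eps_inf prm" and w: "\<And>i. 0 \<le> wv prm $ i"
    and G: "0 \<le> G" and J: "0 \<le> J" and mu_hi: "0 \<le> mu_hi"
  shows "\<exists>mu_lo > 0. \<exists>th > 0. th \<le> 1/2 \<and> (\<forall>x s y mu.
    (\<forall>j. \<bar>grad P x $ j\<bar> \<le> G) \<longrightarrow> (\<forall>i j. \<bar>jac P x $ i $ j\<bar> \<le> J) \<longrightarrow>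
    condC P prm (x, s, y, mu) \<longrightarrow> mu \<le> mu_hi \<longrightarrow> aggr P prm (x, s, y, mu) \<longrightarrow>
    \<not> termT1 P prm (x, s, y, mu) \<longrightarrow> \<not> termT2 P prm (x, s, y, mu) \<longrightarrow>
    mu_lo < mu \<and> th \<le> theta prm mu s)"
proof -
  obtain mu_lo where mu_lo: "0 < mu_lo" and T1: "\<forall>x s y mu. (\<forall>i j. \<bar>jac P x $ i $ j\<bar> \<le> J) \<longrightarrow>
      condC P prm (x, s, y, mu) \<longrightarrow> aggr P prm (x, s, y, mu) \<longrightarrow> \<not> termT1 P prm (x, s, y, mu)
      \<longrightarrow> mu_lo < mu"
    using aggr_barrier_lower_bound[OF b1 b3(2) eps(1)] by blast
  obtain Q where Q: "0 < Q" and T2: "\<forall>x s y mu. (\<forall>j. \<bar>grad P x $ j\<bar> \<le> G) \<longrightarrow>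
      (\<forall>i j. \<bar>jac P x $ i $ j\<bar> \<le> J) \<longrightarrow> condC P prm (x, s, y, mu) \<longrightarrow> aggr P prm (x, s, y, mu)
      \<longrightarrow> mu_lo \<le> mu \<longrightarrow> mu \<le> mu_hi \<longrightarrow> \<not> termT2 P prm (x, s, y, mu) \<longrightarrow>
      (\<forall>i. 0 < wv prm $ i \<longrightarrow> beta3 prm * mu * wv prm $ i \<le> s $ i * Q)"
    using aggr_slack_lower_bound[OF b1 b3(2) eps(2,3) w G J mu_lo mu_hi] by blast
  define th where "th = min (1/2) ((beta3 prm - beta2 prm) / (2 * Q))"
  have "mu_lo < mu \<and> th \<le> theta prm mu s"
    if gJ: "\<forall>j. \<bar>grad P x $ j\<bar> \<le> G" "\<forall>i j. \<bar>jac P x $ i $ j\<bar> \<le> J"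
      and C: "condC P prm (x, s, y, mu)" and mu: "mu \<le> mu_hi" and agg: "aggr P prm (x, s, y, mu)"
      and nT: "\<not> termT1 P prm (x, s, y, mu)" "\<not> termT2 P prm (x, s, y, mu)"
    for x s y mu
  proof
    show lo: "mu_lo < mu"
      using T1[rule_format, OF gJ(2)[rule_format] C agg nT(1)] .
    show "th \<le> theta prm mu s"
      unfolding th_def
    proof (rule theta_ge)
      show "beta3 prm * mu * wv prm $ i \<le> s $ i * Q" if "0 < wv prm $ i" for i
        using T2[rule_format, OF gJ(1)[rule_format] gJ(2)[rule_format] C agg less_imp_le[OF lo] mu nT(2) that] .
    qed (use Q b3 C in auto)
  qed
  moreover have "0 < th" "th \<le> 1/2"
    using b3 Q by (simp_all add: th_def)
  ultimately show ?thesis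
    using mu_lo by (intro exI[of _ mu_lo] exI[of _ th]) auto
qed

lemma finite_contraction_indices:
  fixes u :: "nat \<Rightarrow> real"
  assumes c: "0 < c" "c \<le> 1" and b: "0 < b" and u0: "0 < u 0"
    and mono: "\<And>k. u (Suc k) \<le> u k"
    and contract: "\<And>k. k \<in> A \<Longrightarrow> u (Suc k) \<le> (1 - c) * u k"
    and lower: "\<And>k. k \<in> A \<Longrightarrow> b < u k"
  shows "finite A"
proof (rule ccontr)
  assume inf: "infinite A"
  define N where "N k = card {j \<in> A. j < k}" for k
  have decay: "u k \<le> u 0 * (1 - c) ^ N k" for k
  proof (induction k)
    case 0
    then show ?case
      by (simp add: N_def)
  next
    case (Suc k)
    have "{j \<in> A. j < Suc k} = (if k \<in> A then insert k {j \<in> A. j < k} else {j \<in> A. j < k})"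
      by (auto simp: less_Suc_eq)
    then show ?case
    proof (cases "k \<in> A")
      case True
      then have "u (Suc k) \<le> (1 - c) * (u 0 * (1 - c) ^ N k)"
        using contract[of k] Suc.IH c(2) by (meson mult_left_mono diff_ge_0_iff_ge order_trans)
      then show ?thesis
        using True \<open>{j \<in> A. j < Suc k} = _\<close> by (simp add: N_def ac_simps)
    next
      case False
      then show ?thesis
        using mono[of k] Suc.IH \<open>{j \<in> A. j < Suc k} = _\<close> by (simp add: N_def)
    qed
  qed
  obtain n where n: "(1 - c) ^ n < b / u 0"
    using real_arch_pow_inv[of "b / u 0" "1 - c"] b u0 c(1) by auto
  obtain B where B: "finite B" "card B = n" "B \<subseteq> A"
    using infinite_arbitrarily_large[OF inf] by blast
  obtain m where "\<forall>j \<in> B. j \<le> m"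
    using B(1) finite_nat_set_iff_bounded_le by blast
  moreover obtain k where "k \<in> A" "m < k"
    using inf unfolding infinite_nat_iff_unbounded by blast
  ultimately have k: "k \<in> A" "\<forall>j \<in> B. j < k"
    by auto
  have "n \<le> N k"
    unfolding N_def B(2)[symmetric] using B(3) k(2) by (intro card_mono) auto
  then have "(1 - c) ^ N k \<le> (1 - c) ^ n"
    using c by (intro power_decreasing) auto
  then have "u k \<le> u 0 * (1 - c) ^ n"
    using decay[of k] u0 by (meson less_imp_le mult_left_mono order_trans)
  also have "\<dots> < b"
    using n u0 by (simp add: pos_less_divide_eq mult.commute)
  finally show False
    using lower[OF k(1)] by simp
qed

lemma continuous_bounded_on_linf_le:
  fixes f :: "real^'n::finite \<Rightarrow> 'a::real_normed_vector"
  assumes "continuous_on UNIV f"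
  shows "\<exists>B. \<forall>x. linf x \<le> R \<longrightarrow> norm (f x) \<le> B"
proof -
  have norm_le: "norm x \<le> CARD('n) * R" if "linf x \<le> R" for x :: "real^'n"
  proof -
    have "l1 x \<le> CARD('n) * R"
      using linf_nth_le[of x] that by (intro l1_leI) (meson order_trans)
    then show ?thesis
      using norm_le_l1_cart[of x] by (simp add: l1_def)
  qed
  have "bounded (f ` cball 0 (CARD('n) * R))"
    using assms by (intro compact_imp_bounded compact_continuous_image) (auto intro: continuous_on_subset)
  then obtain B where "\<forall>x \<in> cball 0 (CARD('n) * R). norm (f x) \<le> B"
    unfolding bounded_iff by blast
  then show ?thesis
    using norm_le by (intro exI[of _ B]) auto
qed

lemma problem_data_bounded:
  fixes P :: "('n::finite, 'm::finite) problem"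
  assumes "\<And>x. (grad P has_derivative (\<lambda>h. hess P x *v h)) (at x)"
    and "\<And>i x. ((\<lambda>z. jac P z $ i) has_derivative (\<lambda>h. chess P i x *v h)) (at x)"
  shows "\<exists>G J. 0 \<le> G \<and> 0 \<le> J \<and> (\<forall>x. linf x \<le> R \<longrightarrow>
    (\<forall>j. \<bar>grad P x $ j\<bar> \<le> G) \<and> (\<forall>i j. \<bar>jac P x $ i $ j\<bar> \<le> J))"
proof -
  have "continuous_on UNIV (grad P)"
    using has_derivative_continuous[OF assms(1)] by (intro continuous_at_imp_continuous_on) blast
  moreover have "continuous_on UNIV (\<lambda>z. \<chi> i. jac P z $ i)"
    using has_derivative_continuous[OF assms(2)]
    by (intro continuous_on_vec_lambda continuous_at_imp_continuous_on) blast
  ultimately have cont: "continuous_on UNIV (grad P)" "continuous_on UNIV (jac P)"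
    by simp_all
  obtain G where G: "\<forall>x. linf x \<le> R \<longrightarrow> norm (grad P x) \<le> G"
    using continuous_bounded_on_linf_le[OF cont(1)] by blast
  obtain J where J: "\<forall>x. linf x \<le> R \<longrightarrow> norm (jac P x) \<le> J"
    using continuous_bounded_on_linf_le[OF cont(2)] by blast
  have "\<bar>grad P x $ j\<bar> \<le> max 0 G" if "linf x \<le> R" for x j
    using G that component_le_norm_cart[of "grad P x" j] by (meson max.coboundedI2 order_trans)
  moreover have "\<bar>jac P x $ i $ j\<bar> \<le> max 0 J" if "linf x \<le> R" for x i j
  proof -
    have "\<bar>jac P x $ i $ j\<bar> \<le> norm (jac P x)"
      using component_le_norm_cart[of "jac P x $ i" j] Finite_Cartesian_Product.norm_nth_le[of "jac P x" i]
      by linarith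
    then show ?thesis
      using J that by (meson max.coboundedI2 order_trans)
  qed
  ultimately show ?thesis
    by (intro exI[of _ "max 0 G"] exI[of _ "max 0 J"]) simp
qed

lemma alg1_step_condC_barrier_mono:
  assumes "condC P prm st" and "alg1_step P prm st st'"
  shows "condC P prm st' \<and> barrier_param st' \<le> barrier_param st"
proof (cases st)
  case (fields x s y mu)
  then have mu: "0 \<le> mu"
    using assms(1) by simp
  show ?thesis
  proof (cases "aggr P prm st")
    case True
    then obtain delta where "alg2 P prm delta (x, s, y, mu) st' True"
      using alg1_step_aggr_alg2[of P prm x s y mu st'] assms(2) fields by blast
    then have "condC P prm st' \<and> barrier_param st' \<le> mu"
      using alg2_success[OF _ mu] by blast
    then show ?thesis
      using fields by simp
  next
    case False
    then obtain delta where "alg3 P prm delta (x, s, y, mu) st'"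
      using alg1_step_stab_alg3[of P prm x s y mu st'] assms(2) fields by blast
    then have "condC P prm st' \<and> barrier_param st' = mu"
      by (rule alg3_result)
    then show ?thesis
      using fields by simp
  qed
qed

lemma alg1_run_condC:
  assumes "condC P prm (run 0)" and "\<And>k. alg1_step P prm (run k) (run (Suc k))"
  shows "condC P prm (run k)"
  by (induction k) (use assms alg1_step_condC_barrier_mono in blast)+

lemma alg1_run_aggr_contracts:
  fixes P :: "('n::finite, 'm::finite) problem" and run :: "nat \<Rightarrow> ('n, 'm) state"
  assumes b1: "0 \<le> beta1 prm" and b3: "beta2 prm < beta3 prm" "0 < beta3 prm"
    and eps: "0 < eps_opt prm" "0 < eps_far prm" "0 < eps_inf prm" and w: "\<And>i. 0 \<le> wv prm $ i"
    and G: "0 \<le> G" and J: "0 \<le> J" and GJ: "\<forall>x. linf x \<le> 1 / eps_unbd prm \<longrightarrow>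
      (\<forall>j. \<bar>grad P x $ j\<bar> \<le> G) \<and> (\<forall>i j. \<bar>jac P x $ i $ j\<bar> \<le> J)"
    and init: "condC P prm (run 0)" and steps: "\<And>k. alg1_step P prm (run k) (run (Suc k))"
  shows "\<exists>mu_lo > 0. \<exists>th > 0. th \<le> 1/2 \<and> (\<forall>k. aggr P prm (run k) \<longrightarrow>
    mu_lo < barrier_param (run k) \<and> barrier_param (run (Suc k)) \<le> (1 - th) * barrier_param (run k))"
proof -
  define u where "u k = barrier_param (run k)" for k
  have C: "condC P prm (run k)" for k
    using alg1_run_condC[OF init steps] .
  have "u (Suc k) \<le> u k" for k
    using alg1_step_condC_barrier_mono[OF C steps] by (simp add: u_def)
  then have u_le: "u k \<le> u 0" for k
    by (induction k) (auto intro: order_trans)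
  have "0 \<le> u 0"
    using C[of 0] by (cases "run 0") (simp add: u_def)
  then obtain mu_lo th where lo: "0 < mu_lo" and th: "0 < th" "th \<le> 1/2" and uniform: "\<forall>x s y mu.
      (\<forall>j. \<bar>grad P x $ j\<bar> \<le> G) \<longrightarrow> (\<forall>i j. \<bar>jac P x $ i $ j\<bar> \<le> J) \<longrightarrow>
      condC P prm (x, s, y, mu) \<longrightarrow> mu \<le> u 0 \<longrightarrow> aggr P prm (x, s, y, mu) \<longrightarrow>
      \<not> termT1 P prm (x, s, y, mu) \<longrightarrow> \<not> termT2 P prm (x, s, y, mu) \<longrightarrow>
      mu_lo < mu \<and> th \<le> theta prm mu s"
    using aggressive_uniform_bounds[OF b1 b3 eps w G J] by blast
  have "mu_lo < u k \<and> u (Suc k) \<le> (1 - th) * u k" if agg: "aggr P prm (run k)" for k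
  proof (cases "run k")
    case (fields x s y mu)
    have nT: "\<not> termT1 P prm (x, s, y, mu)" "\<not> termT2 P prm (x, s, y, mu)" "\<not> termT3 P prm (x, s, y, mu)"
      using alg1_step_nonterminal[OF steps[of k]] fields by auto
    then have "(\<forall>j. \<bar>grad P x $ j\<bar> \<le> G) \<and> (\<forall>i j. \<bar>jac P x $ i $ j\<bar> \<le> J)"
      using GJ by simp
    moreover have "mu \<le> u 0"
      using u_le[of k] fields by (simp add: u_def)
    ultimately have bounds: "mu_lo < mu \<and> th \<le> theta prm mu s"
      using uniform C[of k] agg nT unfolding fields by blast
    have "(1 - theta prm mu s) * mu \<le> (1 - th) * mu"
      using bounds C[of k] unfolding fields by (intro mult_right_mono) auto
    moreover have "u (Suc k) \<le> (1 - theta prm mu s) * mu"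
      using alg1_step_aggr_contracts[of P prm x s y mu] steps[of k] agg C[of k] fields by (simp add: u_def)
    ultimately show ?thesis
      using bounds fields by (simp add: u_def)
  qed
  then show ?thesis
    using lo th unfolding u_def by blast
qed

theorem corollary1:
  fixes P :: "('n::finite, 'm::finite) problem"
    and prm :: "'m params"
    and run :: "nat \<Rightarrow> ('n, 'm) state"
  assumes f_diff: "\<And>x. (obj P has_derivative (\<lambda>h. grad P x \<bullet> h)) (at x)"
    and f_diff2: "\<And>x. (grad P has_derivative (\<lambda>h. hess P x *v h)) (at x)"
    and a_diff: "\<And>x. (con P has_derivative (\<lambda>h. jac P x *v h)) (at x)"
    and a_diff2: "\<And>i x. ((\<lambda>z. jac P z $ i) has_derivative (\<lambda>h. chess P i x *v h)) (at x)"
    and b1: "0 < beta1 prm" "beta1 prm < 1"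
    and b2: "0 < beta2 prm" "beta2 prm < 1"
    and b3: "beta2 prm < beta3 prm" "beta3 prm < 1"
    and b4: "0 < beta4 prm" "beta4 prm < 1"
    and e_opt: "0 < eps_opt prm"
    and e_far: "0 < eps_far prm" "eps_far prm < 1"
    and e_inf: "0 < eps_inf prm" "eps_inf prm < 1"
    and e_unbd: "0 < eps_unbd prm" "eps_unbd prm < 1"
    and w_nonneg: "\<And>i. 0 \<le> wv prm $ i"
    and init: "condC P prm (run 0)"
    and steps: "\<And>k. alg1_step P prm (run k) (run (Suc k))"
  shows "finite {k. aggr P prm (run k)}"
proof -
  obtain G J where G: "0 \<le> G" and J: "0 \<le> J" and GJ: "\<forall>x. linf x \<le> 1 / eps_unbd prm \<longrightarrow>
      (\<forall>j. \<bar>grad P x $ j\<bar> \<le> G) \<and> (\<forall>i j. \<bar>jac P x $ i $ j\<bar> \<le> J)"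
    using problem_data_bounded[OF f_diff2 a_diff2] by blast
  have b3_pos: "0 < beta3 prm"
    using b2(1) b3(1) by linarith
  obtain mu_lo th where "0 < mu_lo" "0 < th" "th \<le> 1/2" and contracts: "\<forall>k. aggr P prm (run k) \<longrightarrow>
      mu_lo < barrier_param (run k) \<and> barrier_param (run (Suc k)) \<le> (1 - th) * barrier_param (run k)"
    using alg1_run_aggr_contracts[OF less_imp_le[OF b1(1)] b3(1) b3_pos e_opt e_far(1) e_inf(1)
        w_nonneg G J GJ init steps] by blast
  moreover have "barrier_param (run (Suc k)) \<le> barrier_param (run k)" for k
    using alg1_step_condC_barrier_mono[OF alg1_run_condC[OF init steps] steps] by blast
  moreover have "0 < barrier_param (run 0)"
    using init by (cases "run 0") simp
  ultimately show ?thesis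
    by (intro finite_contraction_indices[of th mu_lo "\<lambda>k. barrier_param (run k)"]) auto
qed

end
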